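(* Let $G=(V,E)$ be a graph of neighborhood diversity $k$ with neighborhood diversity classes $N_1,\ldots,N_k$, and let $r$ be a non-negative integer. Then the number of pairwise $r$-nonequivalent shapes of subsets of $V$ in $G$ (i.e., the number of classes of the $r$-equivalence relation on the set of shapes of subsets $X \subseteq V$) is at most $(2r+3)^k$.
   Context: The neighborhood diversity of $G$ is the minimum size of a partition of $V$ into classes such that any two vertices $v,v'$ in the same class satisfy $N(v)\setminus\{v'\} = N(v')\setminus\{v\}$; $N_1,\ldots,N_k$ is such a partition of minimum size $k$. The shape of $X \subseteq V$ is the $k$-tuple $s=(s_1,\ldots,s_k)$ with $s_i = |X\cap N_i|$; its complementary shape is $\overline{s} = (|N_1|-s_1,\ldots,|N_k|-s_k)$, the shape of $V\setminus X$. Two shapes $s,t$ are $r$-equivalent if for every $i$ either $s_i = t_i$ or both $s_i,t_i > r$, and the same condition holds for the complementary shapes $\overline{s},\overline{t}$. *)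

theory Defs
  imports Main
begin

definition simple_graph :: "'a set \<Rightarrow> ('a \<Rightarrow> 'a \<Rightarrow> bool) \<Rightarrow> bool" where
  "simple_graph V E \<longleftrightarrow> finite V \<and> (\<forall>u v. E u v \<longrightarrow> u \<in> V \<and> v \<in> V)
     \<and> (\<forall>u v. E u v \<longrightarrow> E v u) \<and> (\<forall>v. \<not> E v v)"

definition nbh :: "'a set \<Rightarrow> ('a \<Rightarrow> 'a \<Rightarrow> bool) \<Rightarrow> 'a \<Rightarrow> 'a set" where
  "nbh V E v = {u \<in> V. E v u}"

definition nd_partition :: "'a set \<Rightarrow> ('a \<Rightarrow> 'a \<Rightarrow> bool) \<Rightarrow> 'a set set \<Rightarrow> bool" where
  "nd_partition V E P \<longleftrightarrow>
     \<Union>P = V \<and> {} \<notin> P \<and> (\<forall>A\<in>P. \<forall>B\<in>P. A \<noteq> B \<longrightarrow> A \<inter> B = {})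
     \<and> (\<forall>A\<in>P. \<forall>v\<in>A. \<forall>v'\<in>A. nbh V E v - {v'} = nbh V E v' - {v})"

definition neighborhood_diversity :: "'a set \<Rightarrow> ('a \<Rightarrow> 'a \<Rightarrow> bool) \<Rightarrow> nat" where
  "neighborhood_diversity V E = (LEAST k. \<exists>P. nd_partition V E P \<and> finite P \<and> card P = k)"

definition shape :: "(nat \<Rightarrow> 'a set) \<Rightarrow> nat \<Rightarrow> 'a set \<Rightarrow> nat list" where
  "shape N k X = map (\<lambda>i. card (X \<inter> N i)) [0..<k]"

definition comp_shape :: "(nat \<Rightarrow> 'a set) \<Rightarrow> nat \<Rightarrow> nat list \<Rightarrow> nat list" where
  "comp_shape N k s = map (\<lambda>i. card (N i) - s ! i) [0..<k]"

definition shapes :: "'a set \<Rightarrow> (nat \<Rightarrow> 'a set) \<Rightarrow> nat \<Rightarrow> nat list set" where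
  "shapes V N k = {shape N k X | X. X \<subseteq> V}"

definition r_equiv :: "(nat \<Rightarrow> 'a set) \<Rightarrow> nat \<Rightarrow> nat \<Rightarrow> nat list \<Rightarrow> nat list \<Rightarrow> bool" where
  "r_equiv N k r s t \<longleftrightarrow>
     (\<forall>i<k. s ! i = t ! i \<or> (s ! i > r \<and> t ! i > r)) \<and>
     (\<forall>i<k. comp_shape N k s ! i = comp_shape N k t ! i \<or>
            (comp_shape N k s ! i > r \<and> comp_shape N k t ! i > r))"

definition r_equiv_rel :: "'a set \<Rightarrow> (nat \<Rightarrow> 'a set) \<Rightarrow> nat \<Rightarrow> nat \<Rightarrow> (nat list \<times> nat list) set" where
  "r_equiv_rel V N k r = {(s, t). s \<in> shapes V N k \<and> t \<in> shapes V N k \<and> r_equiv N k r s t}"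

end

theory Submission
  imports Defs
begin

text \<open>In each coordinate i an r-equivalence class of a shape s is determined by one
  of 2r+3 possibilities: s_i itself if s_i \<le> r, otherwise the complementary entry if that is
  \<le> r, otherwise "both exceed r". Hence a shape's class is a function of a word of length k over
  an alphabet of size 2r+3.\<close>

definition r_code :: "(nat \<Rightarrow> 'a set) \<Rightarrow> nat \<Rightarrow> nat \<Rightarrow> nat list \<Rightarrow> nat \<Rightarrow> nat" where
  "r_code N k r s i =
     (if s ! i \<le> r then s ! i
      else if comp_shape N k s ! i \<le> r then Suc r + comp_shape N k s ! i
      else 2 * r + 2)"

definition r_codes :: "(nat \<Rightarrow> 'a set) \<Rightarrow> nat \<Rightarrow> nat \<Rightarrow> nat list \<Rightarrow> nat list" where
  "r_codes N k r s = map (r_code N k r s) [0..<k]"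

lemma r_codes_in_lists: "r_codes N k r s \<in> {xs. set xs \<subseteq> {..<2 * r + 3} \<and> length xs = k}"
  unfolding r_codes_def r_code_def by auto

lemma r_equiv_if_r_codes_eq:
  assumes "r_codes N k r s = r_codes N k r t"
  shows "r_equiv N k r s t"
proof -
  have code_eq: "r_code N k r s i = r_code N k r t i" if "i < k" for i
    using arg_cong[OF assms, of "\<lambda>xs. xs ! i"] that by (simp add: r_codes_def)
  show ?thesis
    unfolding r_equiv_def
  proof (intro conjI allI impI)
    fix i assume "i < k"
    with code_eq[OF this] show "s ! i = t ! i \<or> (s ! i > r \<and> t ! i > r)"
      and "comp_shape N k s ! i = comp_shape N k t ! i \<or>
        (comp_shape N k s ! i > r \<and> comp_shape N k t ! i > r)"
      unfolding r_code_def comp_shape_def by (auto split: if_splits)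
  qed
qed

lemma r_equiv_trans:
  assumes "r_equiv N k r s t" and "r_equiv N k r t u"
  shows "r_equiv N k r s u"
  using assms unfolding r_equiv_def by (metis less_imp_le not_le)

lemma equiv_r_equiv_rel: "equiv (shapes V N k) (r_equiv_rel V N k r)"
proof (rule equivI)
  show "r_equiv_rel V N k r \<subseteq> shapes V N k \<times> shapes V N k"
    unfolding r_equiv_rel_def by blast
  show "refl_on (shapes V N k) (r_equiv_rel V N k r)"
    unfolding refl_on_def r_equiv_rel_def r_equiv_def by blast
  show "sym (r_equiv_rel V N k r)"
    unfolding sym_def r_equiv_rel_def r_equiv_def by auto
  show "trans (r_equiv_rel V N k r)"
    unfolding trans_def r_equiv_rel_def using r_equiv_trans by blast
qed

lemma card_quotient_le_card_image:
  assumes "equiv A R" and "finite (f ` A)"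
    and "\<And>x y. x \<in> A \<Longrightarrow> y \<in> A \<Longrightarrow> f x = f y \<Longrightarrow> (x, y) \<in> R"
  shows "card (A // R) \<le> card (f ` A)"
proof -
  define class_of where "class_of c = R `` {SOME x. x \<in> A \<and> f x = c}" for c
  have "R `` {x} = class_of (f x)" if "x \<in> A" for x
  proof -
    define y where "y = (SOME y. y \<in> A \<and> f y = f x)"
    have y: "y \<in> A \<and> f y = f x"
      unfolding y_def by (rule someI_ex) (use \<open>x \<in> A\<close> in blast)
    then have "(x, y) \<in> R"
      using assms(3)[OF \<open>x \<in> A\<close>] by simp
    then show ?thesis
      unfolding class_of_def y_def[symmetric] by (rule equiv_class_eq[OF \<open>equiv A R\<close>])
  qed
  then have "A // R \<subseteq> class_of ` f ` A"
    unfolding quotient_def by auto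
  then show ?thesis
    by (rule surj_card_le[OF \<open>finite (f ` A)\<close>])
qed

theorem proposition2:
  fixes V :: "'a set" and E :: "'a \<Rightarrow> 'a \<Rightarrow> bool" and N :: "nat \<Rightarrow> 'a set" and k r :: nat
  assumes "simple_graph V E"
    and "neighborhood_diversity V E = k"
    and "nd_partition V E (N ` {..<k})"
    and "inj_on N {..<k}"
  shows "card (shapes V N k // r_equiv_rel V N k r) \<le> (2 * r + 3) ^ k"
proof -
  let ?words = "{xs. set xs \<subseteq> {..<2 * r + 3} \<and> length xs = k}"
  have words: "r_codes N k r ` shapes V N k \<subseteq> ?words" "finite ?words"
    using r_codes_in_lists[of N k r] finite_lists_length_eq[of "{..<2 * r + 3}"] by blast+
  have "card (shapes V N k // r_equiv_rel V N k r) \<le> card (r_codes N k r ` shapes V N k)"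
    using equiv_r_equiv_rel finite_subset[OF words]
    by (rule card_quotient_le_card_image)
      (auto simp: r_equiv_rel_def intro: r_equiv_if_r_codes_eq)
  also have "\<dots> \<le> card ?words"
    using card_mono[OF words(2,1)] .
  also have "\<dots> = (2 * r + 3) ^ k"
    by (simp add: card_lists_length_eq)
  finally show ?thesis .
qed

end
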